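(* Let $K$ be a field (e.g. $K=\mathbb{C}$), let $r\geqslant 0$ be an integer, and let $\{a_0(n)\}_{n\in\mathbb{Z}},\ldots,\{a_r(n)\}_{n\in\mathbb{Z}}$ be arbitrary sequences of elements of $K$. Consider the set $V$ of all sequences $\{x(n)\}_{n\in\mathbb{Z}}$ of elements of $K$ satisfying \[ a_r(n)x(n+r)+\ldots+a_1(n)x(n+1)+a_0(n)x(n)=0\quad\text{for every } n\in\mathbb{Z}; \] $V$ is a $K$-vector space. Then the following are equivalent: (1) $\dim_K V=\infty$; (2) $V$ contains a lacunary sequence.
   Context: For a sequence $\{a(n)\}_{n\in\mathbb{Z}}$, its support is $\operatorname{supp}(\{a(n)\})=\{i\in\mathbb{Z}\mid a(i)\neq 0\}$. Two elements $i<j$ of the support are called consecutive if there is no $k$ in the support with $i<k<j$. A sequence is called lacunary if the differences $j-i$ between consecutive elements $i<j$ of its support can be arbitrarily large, i.e. for every $N$ there exist consecutive elements $i<j$ of the support with $j-i>N$. *)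

theory Defs
  imports Complex_Main "HOL-Library.Function_Algebras"
begin

definition seq_scale :: "'a::field \<Rightarrow> (int \<Rightarrow> 'a) \<Rightarrow> (int \<Rightarrow> 'a)" where
  "seq_scale c x = (\<lambda>n. c * x n)"

lemma vector_space_seq_scale: "vector_space (seq_scale :: 'a::field \<Rightarrow> _)"
  by unfold_locales (auto simp: seq_scale_def algebra_simps fun_eq_iff)

definition supp_seq :: "(int \<Rightarrow> 'a::zero) \<Rightarrow> int set" where
  "supp_seq x = {i. x i \<noteq> 0}"

definition consecutive :: "int set \<Rightarrow> int \<Rightarrow> int \<Rightarrow> bool" where
  "consecutive S i j \<longleftrightarrow> i \<in> S \<and> j \<in> S \<and> i < j \<and> \<not> (\<exists>k\<in>S. i < k \<and> k < j)"

definition lacunary :: "(int \<Rightarrow> 'a::zero) \<Rightarrow> bool" where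
  "lacunary x \<longleftrightarrow> (\<forall>N::nat. \<exists>i j. consecutive (supp_seq x) i j \<and> j - i > int N)"

definition sol_space :: "nat \<Rightarrow> (nat \<Rightarrow> int \<Rightarrow> 'a::field) \<Rightarrow> (int \<Rightarrow> 'a) set" where
  "sol_space r a = {x. \<forall>n::int. (\<Sum>i\<le>r. a i n * x (n + int i)) = 0}"

definition infinite_dim :: "(int \<Rightarrow> 'a::field) set \<Rightarrow> bool" where
  "infinite_dim V \<longleftrightarrow> \<not> (\<exists>B. finite B \<and> module.span seq_scale B = V)"

end

theory Submission
  imports Defs
begin

text \<open>If a solution vanishes at \<open>r\<close> consecutive places, cutting it there (keeping only the part
on one side) again gives a solution. Hence the solutions vanishing on \<open>[0, r)\<close>, a subspace of
finite codimension, are sums of solutions supported left of \<open>0\<close> and solutions supported right of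
\<open>r\<close>, and if \<open>V\<close> is infinite-dimensional then one of these two spaces is; by the reflection
\<open>n \<mapsto> -n\<close> we may assume it is the right one. Choosing \<open>r + 1\<close> right-supported solutions with
distinct leading positions, some nonzero combination of them vanishes on a window of length \<open>r\<close>
beyond all leading positions, and cutting it there gives a nonzero finitely supported solution.
These exist arbitrarily far to the right, and adding infinitely many of them with ever larger gaps
gives a lacunary solution.

Conversely, cutting a lacunary solution inside each gap of length \<open>> r\<close> gives infinitely many
solutions with distinct leading positions, and such solutions are linearly independent.\<close>

interpretation vs: vector_space "seq_scale :: 'a::field \<Rightarrow> (int \<Rightarrow> 'a) \<Rightarrow> (int \<Rightarrow> 'a)"
  by (rule vector_space_seq_scale)

lemma seq_scale_apply: "seq_scale c x n = c * x n"
  by (simp add: seq_scale_def)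

definition seq_restrict :: "int set \<Rightarrow> (int \<Rightarrow> 'a::zero) \<Rightarrow> int \<Rightarrow> 'a" where
  "seq_restrict S x = (\<lambda>n. if n \<in> S then x n else 0)"

lemma seq_restrict_apply [simp]: "seq_restrict S x n = (if n \<in> S then x n else 0)"
  by (simp add: seq_restrict_def)

lemma module_hom_seq_restrict:
  "module_hom seq_scale seq_scale (seq_restrict S :: (int \<Rightarrow> 'a::field) \<Rightarrow> _)"
  by (rule module_hom_linearI, unfold_locales) (auto simp: fun_eq_iff seq_scale_apply)

lemma seq_restrict_split: "x = seq_restrict {..<m} x + seq_restrict {m..} (x :: int \<Rightarrow> 'a::monoid_add)"
  by (simp add: fun_eq_iff)

lemma subspace_sol_space: "vs.subspace (sol_space r a)"
  unfolding vs.subspace_def sol_space_def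
  by (auto simp: seq_scale_apply algebra_simps sum.distrib simp flip: sum_distrib_left)

lemma subspace_vanishing_on:
  "vs.subspace U \<Longrightarrow> vs.subspace {x\<in>U. \<forall>i\<in>F. x i = 0}"
  unfolding vs.subspace_def by (auto simp: seq_scale_apply)

lemma sol_space_local:
  assumes "\<And>n. \<exists>y\<in>sol_space r a. \<forall>i\<le>r. x (n + int i) = y (n + int i)"
  shows "x \<in> sol_space r a"
  unfolding sol_space_def
proof (intro CollectI allI)
  fix n
  obtain y where "y \<in> sol_space r a" and "\<forall>i\<le>r. x (n + int i) = y (n + int i)"
    using assms by blast
  then show "(\<Sum>i\<le>r. a i n * x (n + int i)) = 0"
    by (simp add: sol_space_def)
qed

lemma sol_space_cut:
  assumes x: "x \<in> sol_space r a" and gap: "\<And>i. i < r \<Longrightarrow> x (m + int i) = 0"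
  shows "seq_restrict {..<m} x \<in> sol_space r a" and "seq_restrict {m..} x \<in> sol_space r a"
proof -
  have gap': "x k = 0" if "m \<le> k" "k < m + int r" for k
    using gap[of "nat (k - m)"] that by simp
  show cut_left: "seq_restrict {..<m} x \<in> sol_space r a"
  proof (rule sol_space_local)
    fix n
    show "\<exists>y\<in>sol_space r a. \<forall>i\<le>r. seq_restrict {..<m} x (n + int i) = y (n + int i)"
    proof (cases "n < m")
      case True
      then show ?thesis using x gap' by (intro bexI[of _ x]) auto
    next
      case False
      then show ?thesis using vs.subspace_0[OF subspace_sol_space] by (intro bexI[of _ 0]) auto
    qed
  qed
  have "seq_restrict {m..} x = x - seq_restrict {..<m} x"
    by (simp add: fun_eq_iff)
  then show "seq_restrict {m..} x \<in> sol_space r a"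
    using x cut_left by (simp add: vs.subspace_diff[OF subspace_sol_space])
qed

lemma infinite_dim_nonzero:
  assumes "vs.subspace U" and "infinite_dim U"
  shows "\<exists>x\<in>U. x \<noteq> 0"
proof (rule ccontr)
  assume "\<not> ?thesis"
  then have "vs.span {} = U" using vs.subspace_0[OF assms(1)] by auto
  with assms(2) show False unfolding infinite_dim_def by blast
qed

lemma infinite_dim_vanishing_at:
  assumes U: "vs.subspace U" and inf: "infinite_dim U"
  shows "infinite_dim {x\<in>U. x i = 0}"
  unfolding infinite_dim_def
proof
  assume "\<exists>B. finite B \<and> vs.span B = {x\<in>U. x i = 0}"
  then obtain B where B: "finite B" "vs.span B = {x\<in>U. x i = 0}" by blast
  then have BU: "B \<subseteq> U" using vs.span_superset by blast
  obtain y where y: "y \<in> U" "\<forall>x\<in>U. x i = 0 \<or> y i \<noteq> 0"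
    by (cases "\<exists>y\<in>U. y i \<noteq> 0") (use vs.subspace_0[OF U] in auto)
  have "U \<subseteq> vs.span (insert y B)"
  proof
    fix x assume x: "x \<in> U"
    \<comment> \<open>if \<open>y i = 0\<close> then also \<open>x i = 0\<close>, so the junk value \<open>x i / 0 = 0\<close> does no harm\<close>
    have "x - seq_scale (x i / y i) y \<in> vs.span B"
      using B y x U by (auto simp: vs.subspace_diff vs.subspace_scale seq_scale_apply)
    then show "x \<in> vs.span (insert y B)" by (auto simp: vs.span_breakdown_eq)
  qed
  then have "vs.span (insert y B) = U"
    using BU y U by (intro vs.span_subspace) auto
  with inf B(1) show False unfolding infinite_dim_def by blast
qed

lemma infinite_dim_vanishing_on:
  assumes "finite F" and U: "vs.subspace U" and inf: "infinite_dim U"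
  shows "infinite_dim {x\<in>U. \<forall>i\<in>F. x i = 0}"
  using assms(1)
proof (induction F rule: finite_induct)
  case empty
  then show ?case using inf by simp
next
  case (insert i F)
  have "{x\<in>U. \<forall>j\<in>insert i F. x j = 0} = {x\<in>{x\<in>U. \<forall>j\<in>F. x j = 0}. x i = 0}" by auto
  then show ?case
    using infinite_dim_vanishing_at[OF subspace_vanishing_on[OF U] insert.IH] by simp
qed

lemma infinite_dim_sum:
  assumes U: "vs.subspace U" and inf: "infinite_dim U"
    and "L \<subseteq> U" "R \<subseteq> U" and sum: "\<And>x. x \<in> U \<Longrightarrow> \<exists>l\<in>L. \<exists>r\<in>R. x = l + r"
  shows "infinite_dim L \<or> infinite_dim R"
proof (rule ccontr)
  assume "\<not> ?thesis"
  then obtain BL BR where B: "finite BL" "vs.span BL = L" "finite BR" "vs.span BR = R"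
    unfolding infinite_dim_def by blast
  have "U \<subseteq> vs.span (BL \<union> BR)"
  proof
    fix x assume "x \<in> U"
    then obtain l r where "l \<in> vs.span BL" "r \<in> vs.span BR" "x = l + r" using sum B by blast
    then show "x \<in> vs.span (BL \<union> BR)"
      by (metis vs.span_add vs.span_mono sup_ge1 sup_ge2 subsetD)
  qed
  moreover have "BL \<union> BR \<subseteq> U"
    using B \<open>L \<subseteq> U\<close> \<open>R \<subseteq> U\<close> vs.span_superset by blast
  ultimately have "vs.span (BL \<union> BR) = U" using U by (intro vs.span_subspace)
  with inf B show False unfolding infinite_dim_def by blast
qed

lemma infinite_dim_linear_image:
  assumes "module_hom seq_scale seq_scale f" and "infinite_dim (f ` U)"
  shows "infinite_dim U"
  using assms unfolding infinite_dim_def by (metis finite_imageI module_hom.span_image)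

lemma sum_seq_apply: "(\<Sum>g\<in>G. f g) n = (\<Sum>g\<in>G. f g n :: 'a::comm_monoid_add)"
  by (induction G rule: infinite_finite_induct) auto

lemma seq_restrict_in_span_deltas:
  assumes "finite G"
  shows "seq_restrict G x \<in> vs.span ((\<lambda>g n. if n = g then 1 else 0) ` G)"
proof -
  have "seq_restrict G x = (\<Sum>g\<in>G. seq_scale (x g) (\<lambda>n. if n = g then 1 else 0))"
    using assms by (simp add: fun_eq_iff sum_seq_apply seq_scale_apply if_distrib[of "(*) _"] sum.delta cong: if_cong)
  then show ?thesis
    by (metis (no_types, lifting) image_eqI vs.span_base vs.span_scale vs.span_sum)
qed

definition staircase :: "int set \<Rightarrow> (int \<Rightarrow> int \<Rightarrow> 'a::zero) \<Rightarrow> bool" where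
  "staircase D X \<longleftrightarrow> (\<forall>p\<in>D. X p p \<noteq> 0 \<and> (\<forall>q<p. X p q = 0))"

lemma staircase_subset: "staircase D X \<Longrightarrow> D' \<subseteq> D \<Longrightarrow> staircase D' X"
  by (auto simp: staircase_def)

lemma staircase_independent:
  fixes X :: "int \<Rightarrow> int \<Rightarrow> 'a::field"
  assumes "finite D" and "staircase D X"
  shows "vs.independent (X ` D) \<and> inj_on X D"
  using assms
proof (induction D rule: finite_linorder_min_induct)
  case empty
  show ?case by (simp add: vs.independent_empty)
next
  case (insert b A)
  have "X ` A \<subseteq> {z. z b = 0}"
    using insert.hyps(2) insert.prems by (auto simp: staircase_def)
  then have "vs.span (X ` A) \<subseteq> {z. z b = 0}"
    by (rule vs.span_minimal) (simp add: vs.subspace_def seq_scale_apply)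
  moreover have "X b b \<noteq> 0" using insert.prems by (simp add: staircase_def)
  ultimately have notin: "X b \<notin> vs.span (X ` A)" by blast
  have "staircase A X"
    using insert.prems by (rule staircase_subset) auto
  then have "vs.independent (X ` A)" and inj: "inj_on X A"
    using insert.IH by auto
  with notin have "vs.independent (insert (X b) (X ` A))"
    by (intro vs.independent_insertI)
  moreover have "X b \<notin> X ` A" using notin vs.span_superset by blast
  ultimately show ?case using inj by auto
qed

lemma infinite_dim_if_staircase:
  assumes "infinite D" and "staircase D X" and "X ` D \<subseteq> U"
  shows "infinite_dim U"
  unfolding infinite_dim_def
proof
  assume "\<exists>B. finite B \<and> vs.span B = U"
  then obtain B where B: "finite B" "vs.span B = U" by blast
  obtain D' where D': "finite D'" "card D' = Suc (card B)" "D' \<subseteq> D"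
    using infinite_arbitrarily_large[OF assms(1)] by blast
  have "vs.independent (X ` D')" "inj_on X D'"
    using staircase_independent[OF D'(1) staircase_subset[OF assms(2) D'(3)]] by auto
  moreover have "X ` D' \<subseteq> vs.span B" using assms(3) B(2) D'(3) by auto
  ultimately have "card D' \<le> card B"
    using vs.independent_span_bound[OF B(1)] by (metis card_image)
  with D'(2) show False by simp
qed

lemma staircase_span_vanishing_on:
  fixes X :: "int \<Rightarrow> int \<Rightarrow> 'a::field"
  assumes D: "finite D" "staircase D X" and G: "finite G" "card G < card D"
  shows "\<exists>z\<in>vs.span (X ` D). (\<forall>g\<in>G. z g = 0) \<and> (\<exists>p\<in>D. z p \<noteq> 0)"
proof -
  interpret restrict_G: module_hom seq_scale seq_scale "seq_restrict G :: (int \<Rightarrow> 'a) \<Rightarrow> _"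
    by (rule module_hom_seq_restrict)
  interpret restrict_D: module_hom seq_scale seq_scale "seq_restrict D :: (int \<Rightarrow> 'a) \<Rightarrow> _"
    by (rule module_hom_seq_restrict)
  have indep: "vs.independent (X ` D)" and inj: "inj_on X D"
    using staircase_independent[OF D] by auto
  have "\<not> inj_on (seq_restrict G) (vs.span (X ` D))"
  proof
    assume inj_G: "inj_on (seq_restrict G) (vs.span (X ` D))"
    have "card D = card (seq_restrict G ` X ` D)"
      using inj_on_subset[OF inj_G vs.span_superset] inj by (simp add: card_image)
    also have "\<dots> \<le> card ((\<lambda>g n. if n = g then 1 else 0 :: 'a) ` G)"
    proof -
      have "vs.independent (seq_restrict G ` X ` D)"
        using indep inj_G by (rule restrict_G.independent_injective_image)
      moreover have "seq_restrict G ` X ` D \<subseteq> vs.span ((\<lambda>g n. if n = g then 1 else 0 :: 'a) ` G)"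
        using seq_restrict_in_span_deltas[OF G(1)] by blast
      ultimately show ?thesis
        using vs.independent_span_bound[OF finite_imageI[OF G(1)]] by blast
    qed
    also have "\<dots> \<le> card G" by (rule card_image_le[OF G(1)])
    finally show False using G(2) by simp
  qed
  then obtain z where z: "z \<in> vs.span (X ` D)" "seq_restrict G z = 0" "z \<noteq> 0"
    unfolding restrict_G.inj_on_iff_eq_0[OF vs.subspace_span] by blast
  have "staircase D (seq_restrict D \<circ> X)"
    using D(2) by (auto simp: staircase_def)
  from staircase_independent[OF D(1) this]
  have "vs.independent (seq_restrict D ` X ` D)" "inj_on (seq_restrict D) (X ` D)"
    by (simp_all add: image_comp inj_on_imageI)
  then have "inj_on (seq_restrict D) (vs.span (X ` D))"
    by (simp add: restrict_D.inj_on_span_iff_independent_image)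
  with z have "seq_restrict D z \<noteq> 0"
    unfolding restrict_D.inj_on_iff_eq_0[OF vs.subspace_span] by blast
  then obtain p where "p \<in> D" "z p \<noteq> 0"
    by (auto simp: fun_eq_iff split: if_splits)
  moreover have "z g = 0" if "g \<in> G" for g
    using fun_cong[OF z(2), of g] that by simp
  ultimately show ?thesis using z(1) by blast
qed

lemma first_nonzero_exists:
  fixes y :: "int \<Rightarrow> 'a::zero"
  assumes "y \<noteq> 0" and below: "\<And>n. n < Q \<Longrightarrow> y n = 0"
  shows "\<exists>p. y p \<noteq> 0 \<and> (\<forall>n<p. y n = 0)"
proof -
  obtain q where "y q \<noteq> 0" using assms(1) by (auto simp: fun_eq_iff)
  moreover from this have "Q \<le> q" using below not_less by blast
  ultimately have q: "y (Q + int (nat (q - Q))) \<noteq> 0" by simp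
  define k where "k = (LEAST k. y (Q + int k) \<noteq> 0)"
  have "y (Q + int k) \<noteq> 0" unfolding k_def by (rule LeastI[of "\<lambda>k. y (Q + int k) \<noteq> 0", OF q])
  moreover have "y n = 0" if "n < Q + int k" for n
  proof (cases "n < Q")
    case False
    then have "nat (n - Q) < k" using that by simp
    then have "y (Q + int (nat (n - Q))) = 0"
      using not_less_Least[of "nat (n - Q)" "\<lambda>k. y (Q + int k) \<noteq> 0"] by (simp add: k_def)
    with False show ?thesis by simp
  qed (use below in simp)
  ultimately show ?thesis by blast
qed

lemma staircase_exists:
  assumes "\<And>Q. \<exists>y\<in>U. y \<noteq> 0 \<and> (\<forall>n<Q. y n = 0)"
  shows "\<exists>D X. finite D \<and> card D = k \<and> staircase D X \<and> X ` D \<subseteq> U"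
proof (induction k)
  case 0
  show ?case by (intro exI[of _ "{}"]) (simp add: staircase_def)
next
  case (Suc k)
  then obtain D X where D: "finite D" "card D = k" "staircase D X" "X ` D \<subseteq> U" by blast
  obtain y where y: "y \<in> U" "y \<noteq> 0" "\<forall>n<Max (insert 0 D) + 1. y n = 0"
    using assms by blast
  then obtain p where p: "y p \<noteq> 0" "\<forall>n<p. y n = 0" using first_nonzero_exists by blast
  have "Max (insert 0 D) + 1 \<le> p" using y(3) p(1) by (meson not_less)
  moreover have "d \<le> Max (insert 0 D)" if "d \<in> D" for d
    using D(1) that by simp
  ultimately have "d < p" if "d \<in> D" for d
    using that by fastforce
  then have "p \<notin> D" by blast
  have "staircase (insert p D) (X(p := y))"
    using D(3) p \<open>p \<notin> D\<close> by (auto simp: staircase_def)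
  moreover have "X(p := y) ` insert p D \<subseteq> U" using D(4) y(1) \<open>p \<notin> D\<close> by auto
  moreover have "finite (insert p D)" "card (insert p D) = Suc k" using D \<open>p \<notin> D\<close> by auto
  ultimately show ?case by blast
qed

lemma nonzero_solution_vanishing_below:
  fixes a :: "nat \<Rightarrow> int \<Rightarrow> 'a::field"
  assumes inf: "infinite_dim {x\<in>sol_space r a. \<forall>n<m. x n = 0}"
  shows "\<exists>y\<in>sol_space r a. y \<noteq> 0 \<and> (\<forall>n<Q. y n = 0)"
proof -
  define Q' where "Q' = max m Q"
  have sub: "vs.subspace {x\<in>sol_space r a. \<forall>n<m. x n = 0}"
    using subspace_vanishing_on[OF subspace_sol_space, where F="{..<m}"] by (simp add: Ball_def)
  have "{x\<in>sol_space r a. \<forall>n\<in>{..<Q'}. x n = 0} =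
      {x\<in>{x\<in>sol_space r a. \<forall>n<m. x n = 0}. \<forall>n\<in>{m..<Q'}. x n = 0}"
    by (auto simp: Q'_def)
  then have "infinite_dim {x\<in>sol_space r a. \<forall>n\<in>{..<Q'}. x n = 0}"
    using infinite_dim_vanishing_on[OF _ sub inf] by simp
  then show ?thesis
    using infinite_dim_nonzero[OF subspace_vanishing_on[OF subspace_sol_space]]
    by (fastforce simp: Q'_def)
qed

lemma finitely_supported_solution:
  fixes a :: "nat \<Rightarrow> int \<Rightarrow> 'a::field"
  assumes inf: "infinite_dim {x\<in>sol_space r a. \<forall>n<m. x n = 0}"
  shows "\<exists>y\<in>sol_space r a. y \<noteq> 0 \<and> finite (supp_seq y) \<and> supp_seq y \<subseteq> {M..}"
proof -
  define U where "U = {x\<in>sol_space r a. \<forall>n\<in>{..<M}. x n = 0}"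
  have subU: "vs.subspace U" unfolding U_def by (intro subspace_vanishing_on subspace_sol_space)
  have "\<exists>y\<in>U. y \<noteq> 0 \<and> (\<forall>n<Q. y n = 0)" for Q
    using nonzero_solution_vanishing_below[OF inf, of "max M Q"] by (auto simp: U_def)
  then obtain D X where D: "finite D" "card D = Suc r" "staircase D X" "X ` D \<subseteq> U"
    using staircase_exists by metis
  \<comment> \<open>the window \<open>[Q, Q + r)\<close> lies beyond all leading positions\<close>
  define Q where "Q = Max D + 1"
  obtain z p where z: "z \<in> vs.span (X ` D)" "\<forall>g\<in>{Q..<Q + int r}. z g = 0" "p \<in> D" "z p \<noteq> 0"
    using staircase_span_vanishing_on[OF D(1,3), of "{Q..<Q + int r}"] D(2) by auto
  have "z \<in> U" using z(1) D(4) vs.span_minimal[OF _ subU] by blast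
  define y where "y = seq_restrict {..<Q} z"
  have "y \<in> sol_space r a"
    unfolding y_def using \<open>z \<in> U\<close> z(2) by (intro sol_space_cut(1)) (auto simp: U_def)
  moreover have "p < Q" using z(3) D(1) by (simp add: Q_def)
  then have "y \<noteq> 0" using z(4) by (auto simp: y_def fun_eq_iff)
  moreover have "supp_seq y \<subseteq> {M..<Q}"
    using \<open>z \<in> U\<close> by (auto simp: supp_seq_def y_def U_def not_less)
  ultimately show ?thesis
    by (intro bexI[of _ y]) (auto intro: finite_subset)
qed

locale gapped_blocks =
  fixes Y :: "nat \<Rightarrow> int \<Rightarrow> 'a::comm_monoid_add" and L H :: "nat \<Rightarrow> int"
  assumes support: "Y k t \<noteq> 0 \<Longrightarrow> L k \<le> t \<and> t \<le> H k"
    and first: "Y k (L k) \<noteq> 0" and last: "Y k (H k) \<noteq> 0"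
    and gap: "H k + int k < L (Suc k)"
begin

lemma L_le_H: "L k \<le> H k"
  using support[OF first] by simp

lemma Y_eq_0: "t < L k \<or> H k < t \<Longrightarrow> Y k t = 0"
  using support by force

lemma L_mono: "k \<le> l \<Longrightarrow> L k + int (l - k) \<le> L l"
proof (induction l)
  case (Suc l)
  have "L l < L (Suc l)" using L_le_H[of l] gap[of l] by simp
  with Suc show ?case by (cases "k = Suc l") (auto simp: Suc_diff_le)
qed simp

lemma H_less_L: "k < l \<Longrightarrow> H k < L l"
  using gap[of k] L_mono[of "Suc k" l] by simp

lemma H_mono: "k \<le> l \<Longrightarrow> H k \<le> H l"
  using H_less_L[of k l] L_le_H[of l] by (cases "k = l") auto

text \<open>Only the blocks \<open>k \<le> t - L 0\<close> can be nonzero at \<open>t\<close>, since \<open>L k \<ge> L 0 + k\<close>.\<close>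

definition glued :: "int \<Rightarrow> 'a" where
  "glued t = (\<Sum>k < Suc (nat (t - L 0)). Y k t)"

lemma sum_blocks_eq:
  assumes "t < L N" and "N \<le> N'"
  shows "(\<Sum>k<N'. Y k t) = (\<Sum>k<N. Y k t)"
proof (rule sum.mono_neutral_right)
  show "\<forall>k\<in>{..<N'} - {..<N}. Y k t = 0"
  proof
    fix k assume "k \<in> {..<N'} - {..<N}"
    then have "L N \<le> L k" using L_mono[of N k] by simp
    with assms(1) show "Y k t = 0" by (intro Y_eq_0) simp
  qed
qed (use assms in auto)

lemma glued_eq_sum:
  assumes "t < L N"
  shows "glued t = (\<Sum>k<N. Y k t)"
proof -
  have "t < L (Suc (nat (t - L 0)))"
    using L_mono[of 0 "Suc (nat (t - L 0))"] by (simp split: if_split_asm)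
  then show ?thesis
    unfolding glued_def using assms sum_blocks_eq by (metis nat_le_linear)
qed

lemma glued_block:
  assumes "L k \<le> t" and "t \<le> H k"
  shows "glued t = Y k t"
proof -
  have "glued t = (\<Sum>l<k. Y l t) + Y k t"
    using glued_eq_sum[of t "Suc k"] H_less_L[of k "Suc k"] assms(2) by simp
  moreover have "Y l t = 0" if "l < k" for l
    using H_less_L[OF that] assms(1) by (intro Y_eq_0) simp
  ultimately show ?thesis by simp
qed

lemma glued_gap:
  assumes "H k < t" and "t < L (Suc k)"
  shows "glued t = 0"
proof -
  have "Y l t = 0" if "l < Suc k" for l
    using H_mono[of l k] that assms(1) by (intro Y_eq_0) simp
  then show ?thesis using glued_eq_sum[OF assms(2)] by simp
qed

lemma lacunary_glued: "lacunary glued"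
  unfolding lacunary_def
proof
  fix N :: nat
  have "consecutive (supp_seq glued) (H N) (L (Suc N))"
    unfolding consecutive_def supp_seq_def
    using glued_block[of N "H N"] glued_block[of "Suc N" "L (Suc N)"] last first
      L_le_H H_less_L[of N "Suc N"] glued_gap[of N]
    by auto
  then show "\<exists>i j. consecutive (supp_seq glued) i j \<and> int N < j - i"
    using gap[of N] by fastforce
qed

end

lemma glued_in_sol_space:
  fixes Y :: "nat \<Rightarrow> int \<Rightarrow> 'a::field"
  assumes "gapped_blocks Y L H" and Y: "\<And>k. Y k \<in> sol_space r a"
  shows "gapped_blocks.glued Y L \<in> sol_space r a"
proof -
  interpret gapped_blocks Y L H by fact
  show ?thesis
  proof (rule sol_space_local)
    fix n
    define N where "N = Suc (nat (n + int r - L 0))"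
    have "n + int r < L N" using L_mono[of 0 N] by (simp add: N_def split: if_split_asm)
    then have "\<forall>i\<le>r. glued (n + int i) = (\<Sum>k<N. Y k) (n + int i)"
      by (auto simp: sum_seq_apply intro!: glued_eq_sum)
    moreover have "(\<Sum>k<N. Y k) \<in> sol_space r a"
      using Y by (intro vs.subspace_sum subspace_sol_space)
    ultimately show "\<exists>y\<in>sol_space r a. \<forall>i\<le>r. glued (n + int i) = y (n + int i)" by blast
  qed
qed

lemma lacunary_solution_if_finitely_supported:
  fixes a :: "nat \<Rightarrow> int \<Rightarrow> 'a::field"
  assumes "\<And>M. \<exists>y\<in>sol_space r a. y \<noteq> 0 \<and> finite (supp_seq y) \<and> supp_seq y \<subseteq> {M..}"
  shows "\<exists>x\<in>sol_space r a. lacunary x"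
proof -
  obtain pick where pick: "\<And>M. pick M \<in> sol_space r a" "\<And>M. pick M \<noteq> 0"
    "\<And>M. finite (supp_seq (pick M))" "\<And>M. supp_seq (pick M) \<subseteq> {M..}"
    using assms by metis
  define Y where "Y = rec_nat (pick 0) (\<lambda>k y. pick (Max (supp_seq y) + int k + 1))"
  define L where "L k = Min (supp_seq (Y k))" for k
  define H where "H k = Max (supp_seq (Y k))" for k
  have Y_Suc: "Y (Suc k) = pick (H k + int k + 1)" for k
    by (simp add: Y_def H_def)
  have pick_supp: "supp_seq (pick M) \<noteq> {}" for M
    using pick(2) by (auto simp: supp_seq_def fun_eq_iff)
  have "\<exists>M. Y k = pick M" for k
    by (cases k) (auto simp: Y_def)
  then have Y: "Y k \<in> sol_space r a" "finite (supp_seq (Y k))" "supp_seq (Y k) \<noteq> {}" for k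
    using pick(1,3) pick_supp by metis+
  have "gapped_blocks Y L H"
  proof
    show "Y k t \<noteq> 0 \<Longrightarrow> L k \<le> t \<and> t \<le> H k" for k t
      using Y(2) by (simp add: L_def H_def supp_seq_def)
    show "Y k (L k) \<noteq> 0" "Y k (H k) \<noteq> 0" for k
      using Min_in[OF Y(2,3)] Max_in[OF Y(2,3)] by (auto simp: L_def H_def supp_seq_def)
    show "H k + int k < L (Suc k)" for k
      using Min_in[OF Y(2,3), of "Suc k"] pick(4)[of "H k + int k + 1"]
      by (auto simp: L_def Y_Suc)
  qed
  then show ?thesis
    using glued_in_sol_space Y(1) gapped_blocks.lacunary_glued by blast
qed

lemma lacunary_solution_if_infinite_dim_right:
  fixes a :: "nat \<Rightarrow> int \<Rightarrow> 'a::field"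
  assumes "infinite_dim {x\<in>sol_space r a. \<forall>n<m. x n = 0}"
  shows "\<exists>x\<in>sol_space r a. lacunary x"
  using finitely_supported_solution[OF assms] by (rule lacunary_solution_if_finitely_supported)

definition reflect :: "(int \<Rightarrow> 'a) \<Rightarrow> int \<Rightarrow> 'a" where
  "reflect x = (\<lambda>n. x (- n))"

lemma reflect_apply [simp]: "reflect x n = x (- n)"
  by (simp add: reflect_def)

lemma reflect_reflect [simp]: "reflect (reflect x) = x"
  by (simp add: reflect_def)

lemma module_hom_reflect: "module_hom seq_scale seq_scale (reflect :: (int \<Rightarrow> 'a::field) \<Rightarrow> _)"
  by (rule module_hom_linearI, unfold_locales) (auto simp: fun_eq_iff seq_scale_apply)

lemma reflect_in_sol_space_iff:
  fixes a :: "nat \<Rightarrow> int \<Rightarrow> 'a::field"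
  shows "reflect x \<in> sol_space r (\<lambda>i n. a (r - i) (- n - int r)) \<longleftrightarrow> x \<in> sol_space r a"
proof -
  \<comment> \<open>the reflected recurrence at \<open>n\<close> is the original one at \<open>- n - r\<close>, read backwards\<close>
  have reindex: "(\<Sum>i\<le>r. a (r - i) (- n - int r) * reflect x (n + int i)) =
        (\<Sum>j\<le>r. a j (- n - int r) * x (- n - int r + int j))" for n
    by (rule sum.reindex_bij_witness[of _ "\<lambda>i. r - i" "\<lambda>i. r - i"]) (auto simp: of_nat_diff)
  show ?thesis
  proof
    assume refl: "reflect x \<in> sol_space r (\<lambda>i n. a (r - i) (- n - int r))"
    show "x \<in> sol_space r a"
      unfolding sol_space_def
    proof (intro CollectI allI)
      fix n
      have "(\<Sum>i\<le>r. a (r - i) (- (- n - int r) - int r) * reflect x (- n - int r + int i)) = 0"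
        using refl unfolding sol_space_def by blast
      then show "(\<Sum>i\<le>r. a i n * x (n + int i)) = 0"
        using reindex[of "- n - int r"] by (simp del: reflect_apply)
    qed
  next
    assume "x \<in> sol_space r a"
    then show "reflect x \<in> sol_space r (\<lambda>i n. a (r - i) (- n - int r))"
      unfolding sol_space_def by (simp only: reindex mem_Collect_eq) blast
  qed
qed

lemma consecutive_reflect:
  "consecutive S i j \<Longrightarrow> consecutive (uminus ` S) (- j) (- i)"
  unfolding consecutive_def by (auto simp: image_iff)

lemma lacunary_reflect:
  assumes "lacunary x"
  shows "lacunary (reflect x)"
  unfolding lacunary_def
proof
  fix N :: nat
  obtain i j where ij: "consecutive (supp_seq x) i j" "int N < j - i"
    using assms unfolding lacunary_def by blast
  have "supp_seq (reflect x) = uminus ` supp_seq x"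
    by (auto simp: supp_seq_def image_iff) (metis minus_minus)
  then have "consecutive (supp_seq (reflect x)) (- j) (- i)"
    using consecutive_reflect[OF ij(1)] by simp
  with ij(2) show "\<exists>i j. consecutive (supp_seq (reflect x)) i j \<and> int N < j - i"
    by (intro exI[of _ "- j"] exI[of _ "- i"]) simp
qed

lemma lacunary_solution_if_infinite_dim_left:
  fixes a :: "nat \<Rightarrow> int \<Rightarrow> 'a::field"
  assumes inf: "infinite_dim {x\<in>sol_space r a. \<forall>n\<ge>m. x n = 0}"
  shows "\<exists>x\<in>sol_space r a. lacunary x"
proof -
  define a' where "a' = (\<lambda>i n. a (r - i) (- n - int r))"
  define R where "R = {y\<in>sol_space r a'. \<forall>n<1 - m. y n = 0}"
  have "{x\<in>sol_space r a. \<forall>n\<ge>m. x n = 0} = reflect ` R"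
  proof (intro set_eqI iffI)
    fix x assume "x \<in> {x\<in>sol_space r a. \<forall>n\<ge>m. x n = 0}"
    then have "reflect x \<in> R" by (auto simp: R_def a'_def reflect_in_sol_space_iff)
    then show "x \<in> reflect ` R" by (metis image_eqI reflect_reflect)
  next
    fix x assume "x \<in> reflect ` R"
    then obtain y where y: "y \<in> R" and x: "x = reflect y" by blast
    then have "x \<in> sol_space r a"
      using reflect_in_sol_space_iff[of x r a] by (simp add: R_def a'_def)
    moreover have "x n = 0" if "m \<le> n" for n
      using y that by (simp add: x R_def)
    ultimately show "x \<in> {x\<in>sol_space r a. \<forall>n\<ge>m. x n = 0}" by blast
  qed
  with inf have "infinite_dim R"
    using infinite_dim_linear_image[OF module_hom_reflect] by metis
  then obtain y where "y \<in> sol_space r a'" "lacunary y"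
    unfolding R_def by (blast dest: lacunary_solution_if_infinite_dim_right)
  then show ?thesis
    using reflect_in_sol_space_iff[of "reflect y" r a] lacunary_reflect by (auto simp: a'_def)
qed

lemma consecutive_unique_left: "consecutive S i j \<Longrightarrow> consecutive S i' j \<Longrightarrow> i = i'"
  unfolding consecutive_def by (meson linorder_neqE)

lemma lacunary_infinite_gap_ends:
  assumes "lacunary x"
  shows "infinite {j. \<exists>i. consecutive (supp_seq x) i j \<and> int N < j - i}"
proof
  define P where "P = {(i, j). consecutive (supp_seq x) i j \<and> int N < j - i}"
  assume "finite {j. \<exists>i. consecutive (supp_seq x) i j \<and> int N < j - i}"
  moreover have "inj_on snd P"
    by (auto simp: P_def inj_on_def dest: consecutive_unique_left)
  moreover have "snd ` P = {j. \<exists>i. consecutive (supp_seq x) i j \<and> int N < j - i}"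
    by (force simp: P_def)
  ultimately have "finite P" by (metis finite_image_iff)
  then obtain B where B: "\<And>p. p \<in> P \<Longrightarrow> snd p - fst p \<le> B"
    using bdd_above_finite[of "(\<lambda>p. snd p - fst p) ` P"] by (auto simp: bdd_above_def)
  obtain i j where "consecutive (supp_seq x) i j" "int (max N (nat B)) < j - i"
    using assms unfolding lacunary_def by blast
  then have "(i, j) \<in> P" and "B < j - i" by (auto simp: P_def)
  with B show False by fastforce
qed

lemma infinite_dim_if_lacunary:
  assumes x: "x \<in> sol_space r a" and "lacunary x"
  shows "infinite_dim (sol_space r a)"
proof -
  define J where "J = {j. \<exists>i. consecutive (supp_seq x) i j \<and> int r < j - i}"
  \<comment> \<open>cutting inside the gap that ends at \<open>j\<close> leaves a solution with leading entry \<open>x j\<close>\<close>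
  define X where "X j = seq_restrict {j - int r..} x" for j
  have gap: "x k = 0" if j: "j \<in> J" and k: "j - int r \<le> k" "k < j" for j k
  proof -
    obtain i where "consecutive (supp_seq x) i j" "int r < j - i"
      using j unfolding J_def by blast
    moreover from this have "i < k" using k(1) by simp
    ultimately show ?thesis using k(2) by (auto simp: consecutive_def supp_seq_def)
  qed
  have "x j \<noteq> 0" if "j \<in> J" for j
    using that by (auto simp: J_def consecutive_def supp_seq_def)
  then have "staircase J X"
    using gap by (auto simp: staircase_def X_def not_le)
  moreover have "X ` J \<subseteq> sol_space r a"
    using gap by (auto simp: X_def intro!: sol_space_cut(2)[OF x])
  ultimately show ?thesis
    using infinite_dim_if_staircase lacunary_infinite_gap_ends[OF \<open>lacunary x\<close>] J_def by blast
qed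

lemma infinite_dim_left_or_right:
  fixes a :: "nat \<Rightarrow> int \<Rightarrow> 'a::field"
  assumes "infinite_dim (sol_space r a)"
  shows "infinite_dim {x\<in>sol_space r a. \<forall>n\<ge>0. x n = 0} \<or>
    infinite_dim {x\<in>sol_space r a. \<forall>n<int r. x n = 0}"
proof -
  define V\<^sub>0 where "V\<^sub>0 = {x\<in>sol_space r a. \<forall>i\<in>{0..<int r}. x i = 0}"
  have "vs.subspace V\<^sub>0"
    unfolding V\<^sub>0_def by (intro subspace_vanishing_on subspace_sol_space)
  moreover have "infinite_dim V\<^sub>0"
    unfolding V\<^sub>0_def using assms by (intro infinite_dim_vanishing_on subspace_sol_space) simp
  moreover have "{x\<in>sol_space r a. \<forall>n\<ge>0. x n = 0} \<subseteq> V\<^sub>0"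
    "{x\<in>sol_space r a. \<forall>n<int r. x n = 0} \<subseteq> V\<^sub>0"
    by (auto simp: V\<^sub>0_def)
  moreover have "\<exists>l\<in>{x\<in>sol_space r a. \<forall>n\<ge>0. x n = 0}.
      \<exists>r'\<in>{x\<in>sol_space r a. \<forall>n<int r. x n = 0}. x = l + r'" if x: "x \<in> V\<^sub>0" for x
  proof -
    have "seq_restrict {..<0} x \<in> {x\<in>sol_space r a. \<forall>n\<ge>0. x n = 0}"
      using x sol_space_cut(1)[of x r a 0] by (auto simp: V\<^sub>0_def)
    moreover have "seq_restrict {0..} x \<in> {x\<in>sol_space r a. \<forall>n<int r. x n = 0}"
      using x sol_space_cut(2)[of x r a 0] by (auto simp: V\<^sub>0_def)
    ultimately show ?thesis using seq_restrict_split[of x 0] by blast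
  qed
  ultimately show ?thesis by (rule infinite_dim_sum)
qed

theorem theorem1:
  fixes r :: nat and a :: "nat \<Rightarrow> int \<Rightarrow> 'a::field"
  shows "infinite_dim (sol_space r a) \<longleftrightarrow> (\<exists>x\<in>sol_space r a. lacunary x)"
proof
  assume "infinite_dim (sol_space r a)"
  then show "\<exists>x\<in>sol_space r a. lacunary x"
    using infinite_dim_left_or_right lacunary_solution_if_infinite_dim_left
      lacunary_solution_if_infinite_dim_right by blast
next
  assume "\<exists>x\<in>sol_space r a. lacunary x"
  then show "infinite_dim (sol_space r a)" using infinite_dim_if_lacunary by blast
qed

end
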